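(* Let $q(x,y)=ax^2+bxy+cy^2$ with $a,b,c\in\mathbb{Z}$ be an indefinite binary quadratic form whose discriminant $\Delta(q)=b^2-4ac>0$ is not a perfect square, and let $k\in\mathbb{Z}$. Then the equation $q(x,y)=k$ has at most $4$ solutions $(x,y)\in\mathbb{Z}^2$ satisfying $$|x|\le\frac{|k|^{1/4}}{\sqrt{\Delta(q)}}.$$ *)

theory Defs
  imports "HOL-Analysis.Analysis"
begin

end

theory Submission
  imports Defs
begin

text \<open>
  Completing the square turns \<open>q(x,y) = k\<close> into \<open>(2cy + bx)\<^sup>2 = \<Delta>x\<^sup>2 + 4ck\<close>, and \<open>c \<noteq> 0\<close>
  because \<open>\<Delta>\<close> is not a square. The bound on \<open>|x|\<close> says \<open>(\<Delta>x\<^sup>2)\<^sup>2 \<le> |k| \<le> |ck|\<close>,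
  so \<open>\<Delta>x\<^sup>2\<close> is a shift \<open>t \<ge> 0\<close> with \<open>t\<^sup>2 \<le> |ck|\<close> making \<open>t + 4ck\<close> a square.
  Distinct squares near \<open>4ck\<close> are too far apart for two such shifts, so \<open>x\<^sup>2\<close> is
  determined; for each \<open>x\<close> the equation is a nondegenerate quadratic in \<open>y\<close>, and the
  solution set is symmetric under \<open>(x,y) \<mapsto> (-x,-y)\<close>, leaving at most four solutions.
\<close>

lemma int_bound_of_root4_bound:
  fixes x k D :: int
  assumes "D > 0"
    and "real_of_int \<bar>x\<bar> \<le> real_of_int \<bar>k\<bar> powr (1/4) / sqrt (real_of_int D)"
  shows "(D * x^2)^2 \<le> \<bar>k\<bar>"
proof -
  have "real_of_int \<bar>x\<bar> * sqrt (real_of_int D) \<le> real_of_int \<bar>k\<bar> powr (1/4)"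
    using assms by (simp add: pos_le_divide_eq)
  then have "(real_of_int \<bar>x\<bar> * sqrt (real_of_int D))^4 \<le> (real_of_int \<bar>k\<bar> powr (1/4))^4"
    by (rule power_mono) (use assms(1) in simp)
  moreover have "(real_of_int \<bar>x\<bar> * sqrt (real_of_int D))^4 = real_of_int ((D * x^2)^2)"
  proof -
    have "sqrt (real_of_int D) ^ 4 = (sqrt (real_of_int D) ^ 2) ^ 2"
      by (simp flip: power_mult)
    then show ?thesis
      using assms(1) by (simp add: power_mult_distrib flip: power_mult[of _ 2 2, simplified])
  qed
  moreover have "(real_of_int \<bar>k\<bar> powr (1/4))^4 = real_of_int \<bar>k\<bar>"
    by (cases "k = 0") (simp_all add: powr_power)
  ultimately show ?thesis by linarith
qed

lemma abs_add_le_abs_diff_squares: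
  fixes s1 s2 :: int
  assumes "\<bar>s1\<bar> \<noteq> \<bar>s2\<bar>"
  shows "\<bar>s1\<bar> + \<bar>s2\<bar> \<le> \<bar>s1^2 - s2^2\<bar>"
proof -
  have "s1^2 - s2^2 = (\<bar>s1\<bar> - \<bar>s2\<bar>) * (\<bar>s1\<bar> + \<bar>s2\<bar>)"
    by (metis abs_mult_self_eq power2_eq_square square_diff_square_factored mult.commute)
  moreover have "1 \<le> \<bar>\<bar>s1\<bar> - \<bar>s2\<bar>\<bar>"
    using assms by linarith
  ultimately have "\<bar>s1^2 - s2^2\<bar> = \<bar>\<bar>s1\<bar> - \<bar>s2\<bar>\<bar> * (\<bar>s1\<bar> + \<bar>s2\<bar>)"
    by (simp add: abs_mult)
  then show ?thesis
    using \<open>1 \<le> \<bar>\<bar>s1\<bar> - \<bar>s2\<bar>\<bar>\<close> mult_right_mono[of 1 "\<bar>\<bar>s1\<bar> - \<bar>s2\<bar>\<bar>" "\<bar>s1\<bar> + \<bar>s2\<bar>"]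
    by simp
qed

lemma square_shift_nonpos:
  fixes s t m :: int
  assumes "s^2 = t + 4*m" "m \<le> 0" "0 \<le> t" "t^2 \<le> -m"
  shows "t = 0"
proof -
  have "4 * t^2 \<le> t"
    using assms zero_le_power2[of s] by linarith
  then show ?thesis
    using assms(3) by (simp add: power2_eq_square) (smt (verit) mult_le_cancel_left1)
qed

lemma square_shift_pos_unique:
  fixes s1 s2 t1 t2 m :: int
  assumes s1: "s1^2 = t1 + 4*m" and s2: "s2^2 = t2 + 4*m"
    and "0 \<le> t1" "0 \<le> t2" "t1^2 \<le> m" "t2^2 \<le> m"
  shows "t1 = t2"
proof (rule ccontr)
  assume "t1 \<noteq> t2"
  have twice_le: "2 * t \<le> \<bar>s\<bar>" if "s^2 = t' + 4*m" "0 \<le> t'" "0 \<le> t" "t^2 \<le> m" for s t t'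
  proof -
    have "(2 * t)^2 \<le> s^2"
      using that by (simp add: power_mult_distrib)
    then show ?thesis
      using abs_le_square_iff[of "2 * t" s] that(3) by simp
  qed
  have "\<bar>s1\<bar> \<noteq> \<bar>s2\<bar>"
  proof
    assume "\<bar>s1\<bar> = \<bar>s2\<bar>"
    then have "s1^2 = s2^2"
      by (metis power2_abs)
    then show False
      using s1 s2 \<open>t1 \<noteq> t2\<close> by simp
  qed
  then have "\<bar>s1\<bar> + \<bar>s2\<bar> \<le> \<bar>t1 - t2\<bar>"
    using abs_add_le_abs_diff_squares s1 s2 by fastforce
  moreover have "2 * t1 \<le> \<bar>s1\<bar>" "2 * t2 \<le> \<bar>s2\<bar>"
    using twice_le assms by blast+
  ultimately show False
    using assms(3,4) \<open>t1 \<noteq> t2\<close> by linarith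
qed

lemma square_shift_unique:
  fixes s1 s2 t1 t2 m :: int
  assumes "s1^2 = t1 + 4*m" "s2^2 = t2 + 4*m"
    and "0 \<le> t1" "0 \<le> t2" "t1^2 \<le> \<bar>m\<bar>" "t2^2 \<le> \<bar>m\<bar>"
  shows "t1 = t2"
proof (cases "m \<le> 0")
  case True
  then show ?thesis
    using square_shift_nonpos[of s1 t1 m] square_shift_nonpos[of s2 t2 m] assms by simp
next
  case False
  then show ?thesis
    using square_shift_pos_unique assms by simp
qed

lemma complete_square_binary_form:
  fixes a b c x y :: "'a::comm_ring_1"
  shows "(2*c*y + b*x)^2 = (b^2 - 4*a*c)*x^2 + 4*(c*(a*x^2 + b*x*y + c*y^2))"
  by (simp add: power2_eq_square algebra_simps)

lemma form_solution_x_square_unique: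
  fixes a b c k x1 y1 x2 y2 :: int
  assumes "0 < b^2 - 4*a*c" "c \<noteq> 0"
    and "a*x1^2 + b*x1*y1 + c*y1^2 = k" "((b^2 - 4*a*c) * x1^2)^2 \<le> \<bar>k\<bar>"
    and "a*x2^2 + b*x2*y2 + c*y2^2 = k" "((b^2 - 4*a*c) * x2^2)^2 \<le> \<bar>k\<bar>"
  shows "x1^2 = x2^2"
proof -
  define D where "D = b^2 - 4*a*c"
  have k_le: "\<bar>k\<bar> \<le> \<bar>c*k\<bar>"
    using \<open>c \<noteq> 0\<close> by (auto simp: abs_mult mult_le_cancel_right1)
  have "(2*c*y1 + b*x1)^2 = D*x1^2 + 4*(c*k)" "(2*c*y2 + b*x2)^2 = D*x2^2 + 4*(c*k)"
    using complete_square_binary_form[of c y1 b x1 a, unfolded assms(3)]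
      complete_square_binary_form[of c y2 b x2 a, unfolded assms(5)]
    by (simp_all add: D_def)
  then have "D*x1^2 = D*x2^2"
  proof (rule square_shift_unique)
    show "0 \<le> D*x1^2" "0 \<le> D*x2^2"
      using assms(1) by (simp_all add: D_def)
    show "(D*x1^2)^2 \<le> \<bar>c*k\<bar>" "(D*x2^2)^2 \<le> \<bar>c*k\<bar>"
      unfolding D_def using assms(4,6) k_le by linarith+
  qed
  then show ?thesis
    using assms(1) by (simp add: D_def)
qed

text \<open>Vieta: for fixed \<open>x\<close>, the two roots in \<open>y\<close> sum to \<open>-b x / c\<close>.\<close>

lemma form_solution_other_root:
  fixes a b c k x y y' :: int
  assumes "c \<noteq> 0" "a*x^2 + b*x*y + c*y^2 = k" "a*x^2 + b*x*y' + c*y'^2 = k"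
  shows "y' = y \<or> y' = - (b*x + c*y) div c"
proof -
  have "(y' - y) * (c*y' + (b*x + c*y)) = 0"
    using assms(2,3) by (simp add: power2_eq_square algebra_simps)
  then have "y' = y \<or> c*y' = - (b*x + c*y)"
    by (simp add: add_eq_0_iff2 eq_neg_iff_add_eq_0)
  then show ?thesis
    using \<open>c \<noteq> 0\<close> by (metis nonzero_mult_div_cancel_left)
qed

lemma symmetric_set_card_le_4:
  fixes S :: "(int \<times> int) set"
  assumes "(x0, y0) \<in> S"
    and "\<And>x y. (x, y) \<in> S \<Longrightarrow> (-x, -y) \<in> S"
    and "\<And>x y. (x, y) \<in> S \<Longrightarrow> x^2 = x0^2"
    and "\<And>y. (x0, y) \<in> S \<Longrightarrow> y = y0 \<or> y = y1"
  shows "finite S \<and> card S \<le> 4"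
proof -
  have "S \<subseteq> set [(x0, y0), (x0, y1), (-x0, -y0), (-x0, -y1)]"
  proof safe
    fix x y
    assume xy: "(x, y) \<in> S"
    have "x = x0 \<or> x = -x0"
      using assms(3)[OF xy] power2_eq_iff by blast
    then have "x = x0 \<and> (y = y0 \<or> y = y1) \<or> x = -x0 \<and> (-y = y0 \<or> -y = y1)"
      using assms(2,4) xy by fastforce
    then show "(x, y) \<in> set [(x0, y0), (x0, y1), (-x0, -y0), (-x0, -y1)]"
      by auto
  qed
  then show ?thesis
    using card_mono[of "set [(x0, y0), (x0, y1), (-x0, -y0), (-x0, -y1)]" S]
      card_length[of "[(x0, y0), (x0, y1), (-x0, -y0), (-x0, -y1)]"]
    by (auto intro: finite_subset)
qed

theorem lemma2:
  fixes a b c k :: int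
  assumes "b^2 - 4*a*c > 0"
    and "\<not> (\<exists>m::int. b^2 - 4*a*c = m^2)"
  shows "finite {(x::int, y::int). a*x^2 + b*x*y + c*y^2 = k \<and>
                  real_of_int \<bar>x\<bar> \<le> (real_of_int \<bar>k\<bar>) powr (1/4) / sqrt (real_of_int (b^2 - 4*a*c))}
         \<and> card {(x::int, y::int). a*x^2 + b*x*y + c*y^2 = k \<and>
                  real_of_int \<bar>x\<bar> \<le> (real_of_int \<bar>k\<bar>) powr (1/4) / sqrt (real_of_int (b^2 - 4*a*c))} \<le> 4"
  (is "finite ?S \<and> card ?S \<le> 4")
proof (cases "?S = {}")
  case True
  then show ?thesis
    by (metis card.empty finite.emptyI zero_le_numeral)
next
  case False
  then obtain x0 y0 where "(x0, y0) \<in> ?S"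
    by auto
  have "c \<noteq> 0"
    using assms(2) by auto
  have solution: "a*x^2 + b*x*y + c*y^2 = k \<and> ((b^2 - 4*a*c) * x^2)^2 \<le> \<bar>k\<bar>"
    if "(x, y) \<in> ?S" for x y
    using that int_bound_of_root4_bound[OF assms(1)] by auto
  show ?thesis
  proof (rule symmetric_set_card_le_4[OF \<open>(x0, y0) \<in> ?S\<close>])
    show "(-x, -y) \<in> ?S" if "(x, y) \<in> ?S" for x y
      using that by (simp add: power2_eq_square)
    show "x^2 = x0^2" if "(x, y) \<in> ?S" for x y
      using form_solution_x_square_unique[OF assms(1) \<open>c \<noteq> 0\<close>]
        solution[OF that] solution[OF \<open>(x0, y0) \<in> ?S\<close>]
      by blast
    show "y = y0 \<or> y = - (b*x0 + c*y0) div c" if "(x0, y) \<in> ?S" for y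
      using form_solution_other_root[OF \<open>c \<noteq> 0\<close>]
        solution[OF that] solution[OF \<open>(x0, y0) \<in> ?S\<close>]
      by blast
  qed
qed

end
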